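(* Let $f$ be a $2\pi$-periodic continuous function with modulus of continuity $\omega(t)$, and let $A=(a_{n,k})$ be a lower triangular infinite matrix of real numbers ($a_{n,k}=0$ for $k>n$) with $a_{n,k}\ge 0$ and $\sum_{k=0}^n a_{n,k}=1$ for all $n$. Let $\beta\ge0$ and suppose \[ \sum_{k=0}^{m-1}(k+1)^{\beta}\left|\frac{a_{n,k}}{(k+1)^{\beta}}-\frac{a_{n,k+1}}{(k+2)^{\beta}}\right|=\mathcal{O}(a_{n,m}) \] for all $m=0,1,\dots,n$ and $n=0,1,\dots$. Suppose there is a function $H(u)\ge0$ such that \[ \int_u^{\pi} t^{-2}\omega(t)\,dt=\mathcal{O}\big(H(u)\big)\ (u\to+0)\quad\text{and}\quad \int_0^{t}H(u)\,du=\mathcal{O}\big(tH(t)\big)\ (t\to+0). \] Then \[ \|T_{n,A}(f)-f\|=\mathcal{O}\big(a_{n,n}H(a_{n,n})\big). \]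
   Context: $S_k(f;x)$ is the $k$-th partial sum of the Fourier series of $f$ at $x$, and $T_{n,A}(f;x):=\sum_{k=0}^n a_{n,k}S_k(f;x)$. $\|\cdot\|$ is the sup-norm. $\omega(\delta)=\sup_{|h|\le\delta}\sup_x|f(x+h)-f(x)|$. The notation $u=\mathcal{O}(v)$ means $u\le Cv$ for a positive constant $C$ (independent of $n$). *)

theory Defs
  imports "HOL-Analysis.Analysis"
begin

definition fourier_a :: "(real \<Rightarrow> real) \<Rightarrow> nat \<Rightarrow> real" where
  "fourier_a f j = (1 / pi) * integral {-pi..pi} (\<lambda>t. f t * cos (real j * t))"

definition fourier_b :: "(real \<Rightarrow> real) \<Rightarrow> nat \<Rightarrow> real" where
  "fourier_b f j = (1 / pi) * integral {-pi..pi} (\<lambda>t. f t * sin (real j * t))"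

definition fourier_partial_sum :: "(real \<Rightarrow> real) \<Rightarrow> nat \<Rightarrow> real \<Rightarrow> real" where
  "fourier_partial_sum f k x =
     fourier_a f 0 / 2 +
     (\<Sum>j=1..k. fourier_a f j * cos (real j * x) + fourier_b f j * sin (real j * x))"

definition matrix_mean :: "(nat \<Rightarrow> nat \<Rightarrow> real) \<Rightarrow> (real \<Rightarrow> real) \<Rightarrow> nat \<Rightarrow> real \<Rightarrow> real" where
  "matrix_mean a f n x = (\<Sum>k=0..n. a n k * fourier_partial_sum f k x)"

definition supnorm :: "(real \<Rightarrow> real) \<Rightarrow> real" where
  "supnorm g = (SUP x. \<bar>g x\<bar>)"

definition modulus_cont :: "(real \<Rightarrow> real) \<Rightarrow> real \<Rightarrow> real" where
  "modulus_cont f \<delta> = Sup {\<bar>f (x + h) - f x\<bar> | x h. \<bar>h\<bar> \<le> \<delta>}"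

end

theory Submission
  imports Defs "HOL-Library.Periodic_Fun"
begin

text \<open>
  Write phi(s) = f(x + s) + f(x - s) - 2 f(x), so that |phi(s)| <= 2 omega(s), and let
  K(s) = sum_k a(n,k) D_k(s) be the corresponding mean of Dirichlet kernels. Then
  T_n f(x) - f(x) = 1/pi * int_0^pi phi(s) K(s) ds, and we split the integral at
  alpha = a(n,n). On [0, alpha] the trivial bound |K(s)| <= 4/s together with
  omega(s)/s <= 4 int_s^pi omega(t)/t^2 dt = O(H(s)) (monotonicity of omega) gives
  O(int_0^alpha H) = O(alpha H(alpha)). On [alpha, pi], summation by parts against the
  increasing weights (k+1)^beta, whose sums against sin((k+1/2)s) are O((j+1)^beta / s),
  turns the variation condition into |K(s)| = O(a(n,n) / s^2); so this part is
  O(alpha int_alpha^pi omega(t)/t^2 dt) = O(alpha H(alpha)).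
\<close>

section \<open>Dirichlet kernels\<close>

definition dirichlet_kernel :: "nat \<Rightarrow> real \<Rightarrow> real" where
  "dirichlet_kernel k s = 1/2 + (\<Sum>j=1..k. cos (real j * s))"

lemma sin_half_mult_dirichlet_kernel:
  "2 * sin (s/2) * dirichlet_kernel k s = sin ((real k + 1/2) * s)"
proof (induction k)
  case (Suc k)
  have "2 * sin (s/2) * cos (real (Suc k) * s) =
      sin ((real (Suc k) + 1/2) * s) - sin ((real k + 1/2) * s)"
    using cos_times_sin[of "real (Suc k) * s" "s/2"] by (simp add: algebra_simps)
  then show ?case using Suc by (simp add: dirichlet_kernel_def distrib_left)
qed (simp add: dirichlet_kernel_def)

lemma sin_half_mult_sum_sin:
  "2 * sin (s/2) * (\<Sum>k\<le>j. sin ((real k + 1/2) * s)) = 1 - cos ((real j + 1) * s)"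
proof (induction j)
  case 0
  show ?case using cos_double_sin[of "s/2"] by (simp add: power2_eq_square)
next
  case (Suc j)
  have "2 * sin (s/2) * sin ((real (Suc j) + 1/2) * s) =
      cos ((real j + 1) * s) - cos ((real (Suc j) + 1) * s)"
    using sin_times_sin[of "(real (Suc j) + 1/2) * s" "s/2"] by (simp add: algebra_simps)
  then show ?case using Suc by (simp add: distrib_left)
qed

lemma abs_sum_sin_le:
  assumes "0 < sin (s/2)"
  shows "\<bar>\<Sum>k\<le>j. sin ((real k + 1/2) * s)\<bar> \<le> 1 / sin (s/2)"
proof -
  have "2 * sin (s/2) * \<bar>\<Sum>k\<le>j. sin ((real k + 1/2) * s)\<bar> = \<bar>1 - cos ((real j + 1) * s)\<bar>"
    using assms by (simp flip: sin_half_mult_sum_sin add: abs_mult)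
  also have "\<dots> \<le> 2"
    using cos_ge_minus_one cos_le_one by (simp add: abs_le_iff)
  finally show ?thesis
    using assms by (simp add: field_simps)
qed

section \<open>Summation by parts and weighted variation\<close>

lemma summation_by_parts:
  fixes u v :: "nat \<Rightarrow> 'a::comm_ring"
  shows "(\<Sum>k\<le>n. u k * v k) =
    u n * (\<Sum>i\<le>n. v i) - (\<Sum>k<n. (u (Suc k) - u k) * (\<Sum>i\<le>k. v i))"
  by (induction n) (simp_all add: algebra_simps)

lemma abs_sum_by_parts_le:
  fixes u v B :: "nat \<Rightarrow> real"
  assumes "\<And>k. k \<le> n \<Longrightarrow> \<bar>\<Sum>i\<le>k. v i\<bar> \<le> B k"
  shows "\<bar>\<Sum>k\<le>n. u k * v k\<bar> \<le> \<bar>u n\<bar> * B n + (\<Sum>k<n. \<bar>u (Suc k) - u k\<bar> * B k)"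
proof -
  have "\<bar>\<Sum>k\<le>n. u k * v k\<bar> \<le>
      \<bar>u n\<bar> * \<bar>\<Sum>i\<le>n. v i\<bar> + (\<Sum>k<n. \<bar>u (Suc k) - u k\<bar> * \<bar>\<Sum>i\<le>k. v i\<bar>)"
    unfolding summation_by_parts
    by (rule order_trans[OF abs_triangle_ineq4 add_mono])
       (auto simp flip: abs_mult intro: order_trans[OF sum_abs] sum_mono)
  also have "\<dots> \<le> \<bar>u n\<bar> * B n + (\<Sum>k<n. \<bar>u (Suc k) - u k\<bar> * B k)"
    using assms by (intro add_mono sum_mono mult_left_mono) auto
  finally show ?thesis .
qed

lemma abs_sum_incseq_mult_le:
  fixes w v :: "nat \<Rightarrow> real"
  assumes "incseq w" "0 \<le> w 0" and partial: "\<And>k. \<bar>\<Sum>i\<le>k. v i\<bar> \<le> M"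
  shows "\<bar>\<Sum>k\<le>j. w k * v k\<bar> \<le> 2 * w j * M"
proof -
  have "0 \<le> M" using partial[of 0] by linarith
  have "w 0 \<le> w j" using \<open>incseq w\<close> by (simp add: incseqD)
  have "\<bar>\<Sum>k\<le>j. w k * v k\<bar> \<le> \<bar>w j\<bar> * M + (\<Sum>k<j. \<bar>w (Suc k) - w k\<bar> * M)"
    using partial by (rule abs_sum_by_parts_le)
  also have "(\<Sum>k<j. \<bar>w (Suc k) - w k\<bar> * M) = (w j - w 0) * M"
    using \<open>incseq w\<close>
    by (simp add: incseq_SucD sum_lessThan_telescope flip: sum_distrib_right)
  finally show ?thesis
    using \<open>0 \<le> w 0\<close> \<open>w 0 \<le> w j\<close> mult_nonneg_nonneg[OF \<open>0 \<le> M\<close> \<open>0 \<le> w 0\<close>]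
    by (simp add: algebra_simps)
qed

lemma abs_sum_weighted_le:
  fixes a v w :: "nat \<Rightarrow> real"
  assumes w: "\<And>k. 0 < w k" and "0 \<le> a n"
    and partial: "\<And>k. k \<le> n \<Longrightarrow> \<bar>\<Sum>i\<le>k. w i * v i\<bar> \<le> w k * M"
  shows "\<bar>\<Sum>k\<le>n. a k * v k\<bar> \<le>
    (a n + (\<Sum>k<n. w k * \<bar>a k / w k - a (Suc k) / w (Suc k)\<bar>)) * M"
proof -
  have "(\<Sum>k\<le>n. a k * v k) = (\<Sum>k\<le>n. a k / w k * (w k * v k))"
    using w by (simp add: less_imp_neq[symmetric])
  also have "\<bar>\<dots>\<bar> \<le> \<bar>a n / w n\<bar> * (w n * M) +
      (\<Sum>k<n. \<bar>a (Suc k) / w (Suc k) - a k / w k\<bar> * (w k * M))"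
    using partial by (rule abs_sum_by_parts_le)
  also have "\<dots> = (a n + (\<Sum>k<n. w k * \<bar>a k / w k - a (Suc k) / w (Suc k)\<bar>)) * M"
    using w[of n] \<open>0 \<le> a n\<close>
    by (simp add: abs_minus_commute sum_distrib_left algebra_simps)
  finally show ?thesis .
qed

definition beta_variation :: "real \<Rightarrow> (nat \<Rightarrow> real) \<Rightarrow> nat \<Rightarrow> real" where
  "beta_variation \<beta> r m = (\<Sum>k<m. (real k + 1) powr \<beta> *
      \<bar>r k / (real k + 1) powr \<beta> - r (k + 1) / (real k + 2) powr \<beta>\<bar>)"

lemma beta_variation_nonneg: "0 \<le> beta_variation \<beta> r m"
  unfolding beta_variation_def by (intro sum_nonneg mult_nonneg_nonneg) auto

lemma pos_of_beta_variation_le: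
  fixes r :: "nat \<Rightarrow> real"
  assumes "\<And>k. 0 \<le> r k" "(\<Sum>k\<le>n. r k) = 1" "beta_variation \<beta> r n \<le> C * r n"
  shows "0 < r n"
proof (rule ccontr)
  assume "\<not> 0 < r n"
  with assms(1)[of n] have "r n = 0" by linarith
  define b where "b k = r k / (real k + 1) powr \<beta>" for k
  have "beta_variation \<beta> r n = 0"
    using assms(3) \<open>r n = 0\<close> beta_variation_nonneg[of \<beta> r n] by simp
  then have step: "b k = b (Suc k)" if "k < n" for k
    using that unfolding beta_variation_def b_def
    by (subst (asm) sum_nonneg_eq_0_iff) (auto simp: add_ac)
  have "b k = b n" if "k \<le> n" for k
    using that by (induction k rule: inc_induct) (auto simp: step)
  then have "r k = 0" if "k \<le> n" for k
    using that \<open>r n = 0\<close> by (simp add: b_def)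
  then show False using assms(2) by simp
qed

section \<open>Pointwise bounds for means of Dirichlet kernels\<close>

lemma sin_ge_quarter:
  assumes "0 \<le> x" "x \<le> pi/2"
  shows "x / 4 \<le> sin x"
proof (cases "x \<le> pi/4")
  case True
  show ?thesis
  proof (cases "x = 0")
    case False
    then obtain z where z: "0 < z" "z < x" "sin x - sin 0 = (x - 0) * cos z"
      using MVT2[of 0 x sin cos] assms by (auto intro: DERIV_sin)
    have "1/2 \<le> cos (pi/4)" by (simp add: cos_45 real_le_rsqrt)
    also have "\<dots> \<le> cos z" using z True by (intro cos_monotone_0_pi_le) auto
    finally have "x * (1/2) \<le> x * cos z" using assms by (intro mult_left_mono) auto
    then show ?thesis using z(3) assms by simp
  qed simp
next
  case False
  have "1/2 \<le> sin (pi/4)" by (simp add: sin_45 real_le_rsqrt)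
  also have "\<dots> \<le> sin x" using False assms by (intro sin_monotone_2pi_le) auto
  finally show ?thesis using assms pi_less_4 by simp
qed

lemma sin_half_ge:
  assumes "0 \<le> s" "s \<le> pi"
  shows "s / 8 \<le> sin (s/2)"
  using sin_ge_quarter[of "s/2"] assms by simp

lemma abs_dirichlet_kernel_le:
  assumes "0 < s" "s \<le> pi"
  shows "\<bar>dirichlet_kernel k s\<bar> \<le> 4 / s"
proof -
  have "s / 8 \<le> sin (s/2)" using sin_half_ge assms by simp
  then have "s / 4 * \<bar>dirichlet_kernel k s\<bar> \<le> 2 * sin (s/2) * \<bar>dirichlet_kernel k s\<bar>"
    by (intro mult_right_mono) auto
  also have "\<dots> = \<bar>2 * sin (s/2) * dirichlet_kernel k s\<bar>"
    using \<open>s / 8 \<le> sin (s/2)\<close> assms by (simp add: abs_mult)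
  also have "\<dots> \<le> 1" by (simp add: sin_half_mult_dirichlet_kernel)
  finally show ?thesis using assms by (simp add: field_simps)
qed

lemma abs_mean_dirichlet_kernel_le:
  fixes r :: "nat \<Rightarrow> real"
  assumes "0 < s" "s \<le> pi" "\<And>k. 0 \<le> r k" "(\<Sum>k\<le>n. r k) = 1"
  shows "\<bar>\<Sum>k\<le>n. r k * dirichlet_kernel k s\<bar> \<le> 4 / s"
proof -
  have "\<bar>r k * dirichlet_kernel k s\<bar> \<le> r k * (4 / s)" for k
    unfolding abs_mult abs_of_nonneg[OF assms(3)]
    by (rule mult_left_mono[OF abs_dirichlet_kernel_le[OF assms(1,2)] assms(3)])
  then have "\<bar>\<Sum>k\<le>n. r k * dirichlet_kernel k s\<bar> \<le> (\<Sum>k\<le>n. r k * (4 / s))"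
    by (intro order_trans[OF sum_abs] sum_mono)
  also have "\<dots> = (\<Sum>k\<le>n. r k) * (4 / s)" by (rule sum_distrib_right[symmetric])
  finally show ?thesis using assms(4) by simp
qed

lemma abs_mean_dirichlet_kernel_le_square:
  fixes r :: "nat \<Rightarrow> real"
  assumes "0 < s" "s \<le> pi" "0 \<le> \<beta>" "\<And>k. 0 \<le> r k"
    and variation: "beta_variation \<beta> r n \<le> C * r n"
  shows "\<bar>\<Sum>k\<le>n. r k * dirichlet_kernel k s\<bar> \<le> 64 * (1 + C) * r n / s\<^sup>2"
proof -
  define w where "w k = (real k + 1) powr \<beta>" for k
  have sin_pos: "0 < sin (s/2)" and sin_ge: "s / 8 \<le> sin (s/2)"
    using sin_half_ge[of s] assms by auto
  have "0 \<le> (1 + C) * r n"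
    using variation beta_variation_nonneg[of \<beta> r n] assms(4)[of n] by (simp add: algebra_simps)
  have "incseq w"
    unfolding w_def using \<open>0 \<le> \<beta>\<close> by (intro incseq_SucI powr_mono2) auto
  then have "\<bar>\<Sum>i\<le>k. w i * sin ((real i + 1/2) * s)\<bar> \<le> w k * (2 / sin (s/2))" for k
    using abs_sum_incseq_mult_le[of w, OF _ _ abs_sum_sin_le[OF sin_pos]]
    by (simp add: w_def ac_simps)
  moreover have "beta_variation \<beta> r n = (\<Sum>k<n. w k * \<bar>r k / w k - r (Suc k) / w (Suc k)\<bar>)"
    unfolding beta_variation_def w_def by (simp add: add_ac)
  ultimately have "\<bar>\<Sum>k\<le>n. r k * sin ((real k + 1/2) * s)\<bar> \<le>
      (r n + beta_variation \<beta> r n) * (2 / sin (s/2))"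
    using assms(4) by (simp only:) (intro abs_sum_weighted_le, auto simp: w_def)
  also have "\<dots> \<le> (1 + C) * r n * (2 / sin (s/2))"
    using variation sin_pos by (intro mult_right_mono) (auto simp: algebra_simps)
  also have "(\<Sum>k\<le>n. r k * sin ((real k + 1/2) * s)) =
      2 * sin (s/2) * (\<Sum>k\<le>n. r k * dirichlet_kernel k s)"
    unfolding sum_distrib_left
    by (intro sum.cong refl) (metis sin_half_mult_dirichlet_kernel mult.left_commute)
  finally have "\<bar>\<Sum>k\<le>n. r k * dirichlet_kernel k s\<bar> \<le> (1 + C) * r n / (sin (s/2))\<^sup>2"
    using sin_pos by (simp add: abs_mult field_simps power2_eq_square)
  also have "\<dots> \<le> (1 + C) * r n / (s/8)\<^sup>2"
    using sin_ge \<open>0 < s\<close> \<open>0 \<le> (1 + C) * r n\<close> by (intro divide_left_mono power_mono) auto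
  finally show ?thesis by (simp add: power2_eq_square mult_ac)
qed

section \<open>Integral representation of the matrix means\<close>

lemma continuous_on_dirichlet_kernel [continuous_intros]:
  "continuous_on S g \<Longrightarrow> continuous_on S (\<lambda>t. dirichlet_kernel k (g t))"
proof -
  have "continuous_on UNIV (dirichlet_kernel k)"
    unfolding dirichlet_kernel_def[abs_def] by (intro continuous_intros)
  then show "continuous_on S g \<Longrightarrow> continuous_on S (\<lambda>t. dirichlet_kernel k (g t))"
    by (rule continuous_on_compose2) auto
qed

lemma dirichlet_kernel_minus [simp]: "dirichlet_kernel k (- s) = dirichlet_kernel k s"
  by (simp add: dirichlet_kernel_def)

lemma dirichlet_kernel_periodic: "dirichlet_kernel k (s + 2 * pi) = dirichlet_kernel k s"
  using cos.plus_of_nat[of "real j * s" j for j]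
  by (simp add: dirichlet_kernel_def distrib_left mult_ac)

lemma integral_dirichlet_kernel: "integral {-pi..pi} (dirichlet_kernel k) = pi"
proof -
  have "integral {-pi..pi} (\<lambda>s. cos (real j * s)) = 0" if "j \<in> {1..k}" for j
    using that integral_cos_nx[of "int j"] by (simp add: mult.commute)
  then show ?thesis
    by (simp add: dirichlet_kernel_def[abs_def] integral_add integral_sum integrable_sum
        integrable_continuous_real continuous_intros)
qed

lemma fourier_partial_sum_eq_integral:
  assumes "continuous_on {-pi..pi} f"
  shows "fourier_partial_sum f k x =
    1/pi * integral {-pi..pi} (\<lambda>t. f t * dirichlet_kernel k (t - x))"
proof -
  have "f t * dirichlet_kernel k (t - x) = f t / 2 +
      (\<Sum>j=1..k. cos (real j * x) * (f t * cos (real j * t)) +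
        sin (real j * x) * (f t * sin (real j * t)))"
    for t
    by (simp add: dirichlet_kernel_def right_diff_distrib cos_diff distrib_left
        sum_distrib_left mult_ac)
  then have "integral {-pi..pi} (\<lambda>t. f t * dirichlet_kernel k (t - x)) = integral {-pi..pi} f / 2 +
      (\<Sum>j=1..k. cos (real j * x) * integral {-pi..pi} (\<lambda>t. f t * cos (real j * t))
        + sin (real j * x) * integral {-pi..pi} (\<lambda>t. f t * sin (real j * t)))"
    using assms
    by (simp add: integral_add integral_sum integrable_sum integrable_add integral_divide
        integrable_continuous_real continuous_intros)
  then show ?thesis
    by (simp add: fourier_partial_sum_def fourier_a_def fourier_b_def sum_distrib_left
        distrib_left mult_ac)
qed

lemma integral_periodic_shift:
  fixes h :: "real \<Rightarrow> 'a::banach"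
  assumes cont: "continuous_on UNIV h" and periodic: "\<And>x. h (x + p) = h x" and "0 < p"
  shows "integral {a..a+p} (\<lambda>s. h (s + c)) = integral {a..a+p} h"
proof -
  interpret periodic_fun_simple h p
    by unfold_locales (rule periodic)
  (* Reduce c modulo p to d in [0, p]; the part of [a + d, a + p + d] beyond a + p is then
     moved back by one period. *)
  define d where "d = c - of_int \<lfloor>c / p\<rfloor> * p"
  have "of_int \<lfloor>c / p\<rfloor> * p \<le> c" "c < (of_int \<lfloor>c / p\<rfloor> + 1) * p"
    using floor_divide_lower floor_divide_upper \<open>0 < p\<close> by blast+
  then have d: "0 \<le> d" "d \<le> p" by (simp_all add: d_def algebra_simps)
  have "h (s + c) = h (s + d)" for s
    using plus_of_int[of "s + d" "\<lfloor>c / p\<rfloor>"] by (simp add: d_def)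
  then have "integral {a..a+p} (\<lambda>s. h (s + c)) = integral {a+d..a+p+d} h"
    using integral_shift_real_ivl[of "a + d" d "a + p + d" h] by simp
  also have "\<dots> = integral {a+d..a+p} h + integral {a+p..a+p+d} h"
    using d
    by (intro Henstock_Kurzweil_Integration.integral_combine[symmetric]
        integrable_continuous_real continuous_on_subset[OF cont]) auto
  also have "integral {a+p..a+p+d} h = integral {a..a+d} h"
    using integral_shift_real_ivl[of "a + p" p "a + p + d" h] by (simp add: plus_period)
  also have "integral {a+d..a+p} h + integral {a..a+d} h = integral {a..a+p} h"
    using d
    by (subst add.commute, intro Henstock_Kurzweil_Integration.integral_combine
        integrable_continuous_real continuous_on_subset[OF cont]) auto
  finally show ?thesis .
qed

lemma integral_symmetric_fold:
  fixes g :: "real \<Rightarrow> 'a::banach"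
  assumes "continuous_on {-a..a} g" "0 \<le> a"
  shows "integral {-a..a} g = integral {0..a} (\<lambda>s. g s + g (- s))"
proof -
  have "integral {-a..a} g = integral {-a..0} g + integral {0..a} g"
    using assms
    by (intro Henstock_Kurzweil_Integration.integral_combine[symmetric]
        integrable_continuous_real) auto
  also have "integral {-a..0} g = integral {0..a} (\<lambda>s. g (- s))"
    using Henstock_Kurzweil_Integration.integral_reflect_real[of a 0 "\<lambda>s. g (- s)"] by simp
  also have "integral {0..a} (\<lambda>s. g (- s)) + integral {0..a} g =
      integral {0..a} (\<lambda>s. g s + g (- s))"
    using assms
    by (subst integral_add) (auto intro!: integrable_continuous_real continuous_intros
        continuous_on_compose2[OF assms(1)] continuous_on_subset[OF assms(1)])
  finally show ?thesis .
qed

lemma fourier_partial_sum_minus_self: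
  assumes cont: "continuous_on UNIV f" and periodic: "\<And>x. f (x + 2 * pi) = f x"
  shows "fourier_partial_sum f k x - f x =
    1/pi * integral {0..pi} (\<lambda>s. (f (x + s) + f (x - s) - 2 * f x) * dirichlet_kernel k s)"
proof -
  have cont_on: "continuous_on S (\<lambda>s. f (g s))" if "continuous_on S g" for S g
    using continuous_on_compose2[OF cont that] by simp
  have "f (t + 2 * pi) * dirichlet_kernel k (t + 2 * pi - x) = f t * dirichlet_kernel k (t - x)"
    for t
    using periodic dirichlet_kernel_periodic[of k "t - x"] by (simp add: algebra_simps)
  then have "integral {-pi..pi} (\<lambda>t. f t * dirichlet_kernel k (t - x)) =
      integral {-pi..pi} (\<lambda>s. f (x + s) * dirichlet_kernel k s)"
    using integral_periodic_shift[of "\<lambda>t. f t * dirichlet_kernel k (t - x)" "2 * pi" "-pi" x]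
    by (simp add: add.commute cont_on continuous_intros)
  then have "fourier_partial_sum f k x - f x =
      1/pi * integral {-pi..pi} (\<lambda>s. (f (x + s) - f x) * dirichlet_kernel k s)"
    unfolding fourier_partial_sum_eq_integral[OF continuous_on_subset[OF cont subset_UNIV]]
    by (simp add: left_diff_distrib integral_diff right_diff_distrib integral_dirichlet_kernel
        integrable_continuous_real cont_on continuous_intros)
  also have "\<dots> = 1/pi * integral {0..pi}
      (\<lambda>s. (f (x + s) + f (x - s) - 2 * f x) * dirichlet_kernel k s)"
    by (subst integral_symmetric_fold) (auto intro!: cont_on continuous_intros simp: algebra_simps)
  finally show ?thesis .
qed

lemma matrix_mean_minus_self:
  assumes cont: "continuous_on UNIV f" and periodic: "\<And>x. f (x + 2 * pi) = f x"
    and rowsum: "(\<Sum>k\<le>n. a n k) = 1"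
  shows "matrix_mean a f n x - f x = 1/pi * integral {0..pi}
    (\<lambda>s. (f (x + s) + f (x - s) - 2 * f x) * (\<Sum>k\<le>n. a n k * dirichlet_kernel k s))"
proof -
  have cont_on: "continuous_on S (\<lambda>s. f (g s))" if "continuous_on S g" for S g
    using continuous_on_compose2[OF cont that] by simp
  have "matrix_mean a f n x - f x = (\<Sum>k\<le>n. a n k * (fourier_partial_sum f k x - f x))"
    using rowsum by (simp add: matrix_mean_def atLeast0AtMost right_diff_distrib sum_subtractf
        flip: sum_distrib_right)
  also have "\<dots> = 1/pi * integral {0..pi}
      (\<lambda>s. \<Sum>k\<le>n. a n k * ((f (x + s) + f (x - s) - 2 * f x) * dirichlet_kernel k s))"
    by (simp add: fourier_partial_sum_minus_self[OF cont periodic] integral_sum sum_divide_distrib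
        integrable_continuous_real cont_on continuous_intros)
  also have "\<dots> = 1/pi * integral {0..pi}
      (\<lambda>s. (f (x + s) + f (x - s) - 2 * f x) * (\<Sum>k\<le>n. a n k * dirichlet_kernel k s))"
    by (simp add: sum_distrib_left mult.left_commute)
  finally show ?thesis .
qed

section \<open>Modulus of continuity\<close>

lemma bounded_range_periodic:
  fixes f :: "real \<Rightarrow> 'a::metric_space"
  assumes cont: "continuous_on UNIV f" and periodic: "\<And>x. f (x + p) = f x" and "0 < p"
  shows "bounded (range f)"
proof -
  interpret periodic_fun_simple f p
    by unfold_locales (rule periodic)
  have "f x \<in> f ` {0..p}" for x
  proof
    define t where "t = x - of_int \<lfloor>x / p\<rfloor> * p"
    show "t \<in> {0..p}"
      using floor_divide_lower[of p x] floor_divide_upper[of p x] \<open>0 < p\<close>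
      by (simp add: t_def algebra_simps)
    show "f x = f t"
      using plus_of_int[of t "\<lfloor>x / p\<rfloor>"] by (simp add: t_def)
  qed
  then have "range f \<subseteq> f ` {0..p}" by blast
  moreover have "bounded (f ` {0..p})"
    by (intro compact_imp_bounded compact_continuous_image continuous_on_subset[OF cont]) auto
  ultimately show ?thesis by (rule bounded_subset[rotated])
qed

lemma bdd_above_increments:
  fixes f :: "real \<Rightarrow> real"
  assumes "bounded (range f)"
  shows "bdd_above {\<bar>f (x + h) - f x\<bar> | x h. \<bar>h\<bar> \<le> \<delta>}"
proof -
  obtain B where B: "\<And>x. \<bar>f x\<bar> \<le> B"
    using assms by (auto simp: bounded_iff)
  have "\<bar>f (x + h) - f x\<bar> \<le> 2 * B" for x h
    using B[of "x + h"] B[of x] by linarith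
  then show ?thesis by (intro bdd_aboveI[of _ "2 * B"]) auto
qed

lemma abs_diff_le_modulus_cont:
  fixes f :: "real \<Rightarrow> real"
  assumes "bounded (range f)" "\<bar>h\<bar> \<le> \<delta>"
  shows "\<bar>f (x + h) - f x\<bar> \<le> modulus_cont f \<delta>"
  unfolding modulus_cont_def using assms by (intro cSup_upper bdd_above_increments) auto

lemma modulus_cont_nonneg:
  fixes f :: "real \<Rightarrow> real"
  assumes "bounded (range f)" "0 \<le> \<delta>"
  shows "0 \<le> modulus_cont f \<delta>"
  using abs_diff_le_modulus_cont[of f 0 \<delta> 0] assms by simp

lemma mono_on_modulus_cont:
  fixes f :: "real \<Rightarrow> real"
  assumes "bounded (range f)"
  shows "mono_on {0..} (modulus_cont f)"
proof (rule mono_onI)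
  fix \<delta>1 \<delta>2 :: real
  assume "\<delta>1 \<in> {0..}" "\<delta>1 \<le> \<delta>2"
  then have "\<bar>f (0 + 0) - f 0\<bar> \<in> {\<bar>f (x + h) - f x\<bar> | x h. \<bar>h\<bar> \<le> \<delta>1}"
    by (auto intro!: exI[of _ 0])
  then show "modulus_cont f \<delta>1 \<le> modulus_cont f \<delta>2"
    unfolding modulus_cont_def using \<open>\<delta>1 \<le> \<delta>2\<close>
    by (intro cSup_subset_mono bdd_above_increments assms) fastforce+
qed

lemma abs_second_difference_le_modulus_cont:
  fixes f :: "real \<Rightarrow> real"
  assumes "bounded (range f)" "0 \<le> s"
  shows "\<bar>f (x + s) + f (x - s) - 2 * f x\<bar> \<le> 2 * modulus_cont f s"
  using abs_diff_le_modulus_cont[OF assms(1), of s s x]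
    abs_diff_le_modulus_cont[OF assms(1), of "-s" s x] assms(2)
  by simp

lemma integrable_mono_div_square:
  fixes g :: "real \<Rightarrow> real"
  assumes mono: "mono_on {u..v} g" and nonneg: "\<And>t. t \<in> {u..v} \<Longrightarrow> 0 \<le> g t" and "0 < u"
  shows "(\<lambda>t. g t / t\<^sup>2) integrable_on {u..v}"
proof -
  (* g t / t^2 is the difference of the monotone functions g t / u^2 and g t (1/u^2 - 1/t^2). *)
  have "mono_on {u..v} (\<lambda>t. g t / u\<^sup>2)"
    using mono by (auto intro!: mono_onI divide_right_mono dest: mono_onD)
  moreover have "mono_on {u..v} (\<lambda>t. g t * (1 / u\<^sup>2 - 1 / t\<^sup>2))"
  proof (rule mono_onI)
    fix r s assume rs: "r \<in> {u..v}" "s \<in> {u..v}" "r \<le> s"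
    have "1 / s\<^sup>2 \<le> 1 / r\<^sup>2" "1 / r\<^sup>2 \<le> 1 / u\<^sup>2"
      using rs \<open>0 < u\<close> by (auto intro!: divide_left_mono power_mono mult_pos_pos)
    then show "g r * (1 / u\<^sup>2 - 1 / r\<^sup>2) \<le> g s * (1 / u\<^sup>2 - 1 / s\<^sup>2)"
      using rs nonneg mono_onD[OF mono] by (intro mult_mono) auto
  qed
  ultimately have "(\<lambda>t. g t / u\<^sup>2 - g t * (1 / u\<^sup>2 - 1 / t\<^sup>2)) integrable_on {u..v}"
    by (intro integrable_diff integrable_on_mono_on)
  then show ?thesis
    by (rule integrable_eq) (simp add: algebra_simps)
qed

lemma mono_div_le_integral:
  fixes g :: "real \<Rightarrow> real"
  assumes mono: "mono_on {u..b} g" and nonneg: "\<And>t. t \<in> {u..b} \<Longrightarrow> 0 \<le> g t"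
    and "0 < u" "2 * u \<le> b"
  shows "g u / u \<le> 4 * integral {u..b} (\<lambda>t. g t / t\<^sup>2)"
proof -
  have "mono_on {u..2*u} g"
    using mono by (rule mono_on_subset) (use assms in auto)
  then have integrable: "(\<lambda>t. g t / t\<^sup>2) integrable_on {u..2*u}"
    using nonneg \<open>0 < u\<close> \<open>2 * u \<le> b\<close> by (intro integrable_mono_div_square) auto
  have "g u / u = 4 * integral {u..2*u} (\<lambda>t. g u / (2 * u)\<^sup>2)"
    using \<open>0 < u\<close> by (simp add: power2_eq_square)
  also have "\<dots> \<le> 4 * integral {u..2*u} (\<lambda>t. g t / t\<^sup>2)"
  proof (intro mult_left_mono integral_le integrable)
    fix t assume t: "t \<in> {u..2*u}"
    then have "g u / (2 * u)\<^sup>2 \<le> g u / t\<^sup>2"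
      using nonneg[of u] \<open>0 < u\<close> assms(4) by (intro divide_left_mono power_mono) auto
    also have "\<dots> \<le> g t / t\<^sup>2"
      using t assms by (intro divide_right_mono mono_onD[OF mono]) auto
    finally show "g u / (2 * u)\<^sup>2 \<le> g t / t\<^sup>2" .
  qed auto
  also have "\<dots> \<le> 4 * integral {u..b} (\<lambda>t. g t / t\<^sup>2)"
    using assms
    by (intro mult_left_mono integral_subset_le integrable integrable_mono_div_square[OF mono]) auto
  finally show ?thesis .
qed

lemma abs_integral_near_le:
  fixes \<Phi> \<omega> H :: "real \<Rightarrow> real"
  assumes "\<Phi> integrable_on {0..\<alpha>}" "0 < \<alpha>" "2 * \<alpha> \<le> b"
    and mono: "mono_on {0<..b} \<omega>" and nonneg: "\<And>t. 0 < t \<Longrightarrow> t \<le> b \<Longrightarrow> 0 \<le> \<omega> t"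
    and bound: "\<And>s. 0 < s \<Longrightarrow> s \<le> \<alpha> \<Longrightarrow> \<bar>\<Phi> s\<bar> \<le> B * (\<omega> s / s)" and "0 \<le> B"
    and H1: "\<And>u. 0 < u \<Longrightarrow> u \<le> \<alpha> \<Longrightarrow> integral {u..b} (\<lambda>t. \<omega> t / t\<^sup>2) \<le> C1 * H u"
    and "0 \<le> C1"
    and H2: "H integrable_on {0..\<alpha>}" "integral {0..\<alpha>} H \<le> C2 * (\<alpha> * H \<alpha>)"
  shows "\<bar>integral {0..\<alpha>} \<Phi>\<bar> \<le> 4 * B * C1 * C2 * (\<alpha> * H \<alpha>)"
proof -
  define g where "g s = (if s = 0 then \<bar>\<Phi> 0\<bar> else 4 * B * C1 * H s)" for s
  have H_int: "(\<lambda>s. 4 * B * C1 * H s) integrable_on {0..\<alpha>}"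
    using integrable_on_cmult_left[OF H2(1), of "4 * B * C1"] by simp
  have g_int: "g integrable_on {0..\<alpha>}"
    by (rule integrable_spike[OF H_int, of "{0}"]) (auto simp: g_def)
  have "integral {0..\<alpha>} g = integral {0..\<alpha>} (\<lambda>s. 4 * B * C1 * H s)"
    by (rule integral_spike[of "{0}"]) (auto simp: g_def)
  then have g_integral: "integral {0..\<alpha>} g = 4 * B * C1 * integral {0..\<alpha>} H"
    by simp
  have "\<bar>\<Phi> s\<bar> \<le> g s" if "s \<in> {0..\<alpha>}" for s
  proof (cases "s = 0")
    case False
    then have s: "0 < s" "s \<le> \<alpha>" using that by auto
    have "\<bar>\<Phi> s\<bar> \<le> B * (\<omega> s / s)" by (rule bound[OF s])
    also have "\<dots> \<le> B * (4 * integral {s..b} (\<lambda>t. \<omega> t / t\<^sup>2))"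
      using s \<open>2 * \<alpha> \<le> b\<close> \<open>0 \<le> B\<close> nonneg
      by (intro mult_left_mono mono_div_le_integral mono_on_subset[OF mono]) auto
    also have "\<dots> \<le> B * (4 * (C1 * H s))"
      using H1[OF s] \<open>0 \<le> B\<close> by (intro mult_left_mono) auto
    finally show ?thesis using False by (simp add: g_def mult_ac)
  qed (simp add: g_def)
  then have "\<bar>integral {0..\<alpha>} \<Phi>\<bar> \<le> integral {0..\<alpha>} g"
    using integral_norm_bound_integral[OF assms(1) g_int] by simp
  also have "\<dots> \<le> 4 * B * C1 * (C2 * (\<alpha> * H \<alpha>))"
    unfolding g_integral using H2(2) \<open>0 \<le> B\<close> \<open>0 \<le> C1\<close> by (intro mult_left_mono) auto
  finally show ?thesis by (simp add: mult_ac)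
qed

lemma abs_integral_far_le:
  fixes \<Phi> \<omega> :: "real \<Rightarrow> real"
  assumes "\<Phi> integrable_on {\<alpha>..b}" "0 < \<alpha>" and mono: "mono_on {\<alpha>..b} \<omega>"
    and nonneg: "\<And>t. t \<in> {\<alpha>..b} \<Longrightarrow> 0 \<le> \<omega> t"
    and bound: "\<And>s. s \<in> {\<alpha>..b} \<Longrightarrow> \<bar>\<Phi> s\<bar> \<le> B * (\<omega> s / s\<^sup>2)"
  shows "\<bar>integral {\<alpha>..b} \<Phi>\<bar> \<le> B * integral {\<alpha>..b} (\<lambda>t. \<omega> t / t\<^sup>2)"
proof -
  have "(\<lambda>t. B * (\<omega> t / t\<^sup>2)) integrable_on {\<alpha>..b}"
    using integrable_on_cmult_left[OF integrable_mono_div_square[OF mono nonneg \<open>0 < \<alpha>\<close>]]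
    by simp
  then have "\<bar>integral {\<alpha>..b} \<Phi>\<bar> \<le> integral {\<alpha>..b} (\<lambda>t. B * (\<omega> t / t\<^sup>2))"
    using integral_norm_bound_integral[OF assms(1)] bound by simp
  then show ?thesis by (simp only: integral_mult_right)
qed

lemma abs_matrix_mean_minus_le:
  fixes f H :: "real \<Rightarrow> real" and a :: "nat \<Rightarrow> nat \<Rightarrow> real"
  assumes cont: "continuous_on UNIV f" and periodic: "\<And>x. f (x + 2 * pi) = f x"
    and nonneg: "\<And>k. 0 \<le> a n k" and rowsum: "(\<Sum>k\<le>n. a n k) = 1"
    and "0 \<le> \<beta>" "0 \<le> C0" and variation: "beta_variation \<beta> (a n) n \<le> C0 * a n n"
    and "0 \<le> C1"
    and H1: "\<And>u. 0 < u \<Longrightarrow> u \<le> pi \<Longrightarrow>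
      integral {u..pi} (\<lambda>t. modulus_cont f t / t\<^sup>2) \<le> C1 * H u"
    and H2: "\<And>t. 0 < t \<Longrightarrow> t \<le> pi \<Longrightarrow>
      H integrable_on {0..t} \<and> integral {0..t} H \<le> C2 * (t * H t)"
  shows "\<bar>matrix_mean a f n x - f x\<bar> \<le>
    (32 * C1 * C2 + 128 * (1 + C0) * C1) / pi * (a n n * H (a n n))"
proof -
  define \<alpha> where "\<alpha> = a n n"
  define \<omega> where "\<omega> = modulus_cont f"
  define \<Phi> where "\<Phi> s = (f (x + s) + f (x - s) - 2 * f x) * (\<Sum>k\<le>n. a n k * dirichlet_kernel k s)"
    for s
  have "0 < \<alpha>"
    unfolding \<alpha>_def by (rule pos_of_beta_variation_le[OF nonneg rowsum variation])
  have "\<alpha> \<le> 1"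
    using member_le_sum[of n "{..n}" "a n"] nonneg rowsum by (simp add: \<alpha>_def)
  then have "2 * \<alpha> \<le> pi" using pi_gt3 by simp
  have bounded: "bounded (range f)"
    using bounded_range_periodic[OF cont periodic] by simp
  then have \<omega>_mono: "mono_on {0..} \<omega>" and \<omega>_nonneg: "\<And>t. 0 \<le> t \<Longrightarrow> 0 \<le> \<omega> t"
    by (simp_all add: \<omega>_def mono_on_modulus_cont modulus_cont_nonneg)
  note \<phi>_le = abs_second_difference_le_modulus_cont[OF bounded, folded \<omega>_def]
  have \<Phi>_int: "\<Phi> integrable_on {u..v}" for u v
    unfolding \<Phi>_def
    by (intro integrable_continuous_real continuous_intros continuous_on_compose2[OF cont]) auto
  have near: "\<bar>integral {0..\<alpha>} \<Phi>\<bar> \<le> 4 * 8 * C1 * C2 * (\<alpha> * H \<alpha>)"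
  proof (rule abs_integral_near_le[OF \<Phi>_int \<open>0 < \<alpha>\<close> \<open>2 * \<alpha> \<le> pi\<close>])
    show "mono_on {0<..pi} \<omega>" using \<omega>_mono by (rule mono_on_subset) auto
    show "\<bar>\<Phi> s\<bar> \<le> 8 * (\<omega> s / s)" if "0 < s" "s \<le> \<alpha>" for s
    proof -
      have "\<bar>\<Phi> s\<bar> \<le> (2 * \<omega> s) * (4 / s)"
        unfolding \<Phi>_def abs_mult using that \<open>2 * \<alpha> \<le> pi\<close> \<omega>_nonneg
        by (intro mult_mono \<phi>_le abs_mean_dirichlet_kernel_le nonneg rowsum) auto
      then show ?thesis by simp
    qed
    show "H integrable_on {0..\<alpha>}" "integral {0..\<alpha>} H \<le> C2 * (\<alpha> * H \<alpha>)"
      using H2[OF \<open>0 < \<alpha>\<close>] \<open>2 * \<alpha> \<le> pi\<close> \<open>0 < \<alpha>\<close> by auto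
  qed (use \<open>0 \<le> C1\<close> H1 \<omega>_nonneg \<open>2 * \<alpha> \<le> pi\<close> in \<open>auto simp: \<omega>_def\<close>)
  have "\<bar>integral {\<alpha>..pi} \<Phi>\<bar> \<le> 128 * (1 + C0) * \<alpha> * integral {\<alpha>..pi} (\<lambda>t. \<omega> t / t\<^sup>2)"
  proof (rule abs_integral_far_le[OF \<Phi>_int \<open>0 < \<alpha>\<close>])
    show "mono_on {\<alpha>..pi} \<omega>" using \<omega>_mono by (rule mono_on_subset) (use \<open>0 < \<alpha>\<close> in auto)
    show "\<bar>\<Phi> s\<bar> \<le> 128 * (1 + C0) * \<alpha> * (\<omega> s / s\<^sup>2)" if "s \<in> {\<alpha>..pi}" for s
    proof -
      have "\<bar>\<Phi> s\<bar> \<le> (2 * \<omega> s) * (64 * (1 + C0) * \<alpha> / s\<^sup>2)"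
        unfolding \<Phi>_def abs_mult \<alpha>_def using that \<open>0 < \<alpha>\<close> \<omega>_nonneg
        by (intro mult_mono \<phi>_le
            abs_mean_dirichlet_kernel_le_square[OF _ _ \<open>0 \<le> \<beta>\<close> nonneg variation])
          (auto simp: \<alpha>_def)
      then show ?thesis by (simp add: mult_ac)
    qed
  qed (use \<omega>_nonneg \<open>0 < \<alpha>\<close> in auto)
  also have "\<dots> \<le> 128 * (1 + C0) * \<alpha> * (C1 * H \<alpha>)"
    using H1[OF \<open>0 < \<alpha>\<close>] \<open>2 * \<alpha> \<le> pi\<close> \<open>0 < \<alpha>\<close> \<open>0 \<le> C0\<close>
    by (intro mult_left_mono) (auto simp: \<omega>_def)
  finally have far: "\<bar>integral {\<alpha>..pi} \<Phi>\<bar> \<le> 128 * (1 + C0) * C1 * (\<alpha> * H \<alpha>)"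
    by (simp add: mult_ac)
  have "\<bar>matrix_mean a f n x - f x\<bar> = \<bar>integral {0..\<alpha>} \<Phi> + integral {\<alpha>..pi} \<Phi>\<bar> / pi"
    using matrix_mean_minus_self[where a=a and n=n, OF cont periodic rowsum] \<open>0 < \<alpha>\<close> \<open>2 * \<alpha> \<le> pi\<close>
    by (simp add: \<Phi>_def[abs_def] \<Phi>_int[unfolded \<Phi>_def] abs_mult
        Henstock_Kurzweil_Integration.integral_combine)
  also have "\<dots> \<le> (32 * C1 * C2 + 128 * (1 + C0) * C1) * (\<alpha> * H \<alpha>) / pi"
    using abs_triangle_ineq[of "integral {0..\<alpha>} \<Phi>" "integral {\<alpha>..pi} \<Phi>"] near far
    by (intro divide_right_mono) (simp_all add: algebra_simps)
  finally show ?thesis by (simp add: \<alpha>_def)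
qed

theorem theorem3p1:
  fixes f :: "real \<Rightarrow> real" and a :: "nat \<Rightarrow> nat \<Rightarrow> real"
    and \<beta> :: real and H :: "real \<Rightarrow> real"
  assumes cont: "continuous_on UNIV f"
    and periodic: "\<And>x. f (x + 2 * pi) = f x"
    and lower: "\<And>n k. n < k \<Longrightarrow> a n k = 0"
    and nonneg: "\<And>n k. a n k \<ge> 0"
    and rowsum: "\<And>n. (\<Sum>k=0..n. a n k) = 1"
    and beta: "\<beta> \<ge> 0"
    and cond: "\<exists>C>0. \<forall>n. \<forall>m\<le>n.
       (\<Sum>k<m. (real k + 1) powr \<beta> *
          \<bar>a n k / (real k + 1) powr \<beta> - a n (k + 1) / (real k + 2) powr \<beta>\<bar>)
       \<le> C * a n m"
    and H_nonneg: "\<And>u. 0 < u \<Longrightarrow> u \<le> pi \<Longrightarrow> H u \<ge> 0"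
    and H1: "\<exists>C>0. \<forall>u. 0 < u \<and> u \<le> pi \<longrightarrow>
       integral {u..pi} (\<lambda>t. modulus_cont f t / t\<^sup>2) \<le> C * H u"
    and H2: "\<exists>C>0. \<forall>t. 0 < t \<and> t \<le> pi \<longrightarrow>
       H integrable_on {0..t} \<and> integral {0..t} H \<le> C * (t * H t)"
  shows "\<exists>C>0. \<forall>n. supnorm (\<lambda>x. matrix_mean a f n x - f x) \<le> C * (a n n * H (a n n))"
proof -
  obtain C0 where "0 < C0" and C0: "\<And>n. beta_variation \<beta> (a n) n \<le> C0 * a n n"
    using cond unfolding beta_variation_def by blast
  obtain C1 where "0 < C1" and C1: "\<And>u. 0 < u \<Longrightarrow> u \<le> pi \<Longrightarrow>
      integral {u..pi} (\<lambda>t. modulus_cont f t / t\<^sup>2) \<le> C1 * H u"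
    using H1 by blast
  obtain C2 where "0 < C2" and C2: "\<And>t. 0 < t \<Longrightarrow> t \<le> pi \<Longrightarrow>
      H integrable_on {0..t} \<and> integral {0..t} H \<le> C2 * (t * H t)"
    using H2 by blast
  define C where "C = (32 * C1 * C2 + 128 * (1 + C0) * C1) / pi"
  have "0 < C"
    unfolding C_def using \<open>0 < C0\<close> \<open>0 < C1\<close> \<open>0 < C2\<close> by (simp add: add_pos_pos)
  have "\<bar>matrix_mean a f n x - f x\<bar> \<le> C * (a n n * H (a n n))" for n x
    unfolding C_def using rowsum[of n] \<open>0 < C0\<close> \<open>0 < C1\<close> beta
    by (intro abs_matrix_mean_minus_le[OF cont periodic nonneg _ _ _ C0 _ C1 C2])
      (auto simp: atLeast0AtMost)
  then show ?thesis
    unfolding supnorm_def using \<open>0 < C\<close> by (auto intro!: cSUP_least)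
qed

end
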